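(* Let $f:X\to Y$ be a continuous map between metric spaces, with $X$ complete. If $f$ has the bounded path-lifting property for every rectifiable path $p:[0,1]\to Y$, then $f$ has the continuation property for every rectifiable path $p:[0,1]\to Y$. Consequently, if in addition $Y$ is path-connected and locally $\mathcal R$-contractible and $f$ is a local homeomorphism, then $f$ is a covering projection.
   Context: Length of a path $p:[a,b]\to Y$: $\ell(p)=\sup\sum_{i}d(p(t_i),p(t_{i+1}))$ over partitions of $[a,b]$; $p$ is rectifiable if $\ell(p)<\infty$. $\mathcal R$ denotes the family of all rectifiable paths $[0,1]\to Y$. $Y$ is locally $\mathcal R$-contractible if every $y_0\in Y$ has an open neighborhood $U$ with a continuous homotopy $H:U\times[0,1]\to U$ such that $H(y_0,t)=y_0$ for all $t$, $H(y,0)=y_0$, $H(y,1)=y$ for all $y\in U$, and each path $t\mapsto H(y,t)$ is rectifiable. For non-isolated $x\in X$, $D_x^-f=\liminf_{z\to x,\,z\neq x}\frac{d(f(z),f(x))}{d(z,x)}$; $X$ is assumed to have no isolated points. $f$ has the continuation property for $p:[0,1]\to Y$ if for every $b\in(0,1]$ and every continuous $q:[0,b)\to X$ with $f\circ q=p$ on $[0,b)$ there is a sequence $t_n\to b$ in $[0,b)$ with $(q(t_n))$ convergent in $X$. $f$ has the bounded path-lifting property for $p:[0,1]\to Y$ if for every $b\in(0,1]$ and every continuous $q:[0,b)\to X$ with $f\circ q=p$ on $[0,b)$ there exists $\alpha>0$ with $\inf\{D_x^-f:x\in\operatorname{Im}q\}\ge\alpha$. *)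

theory Defs
  imports "HOL-Analysis.Analysis"
begin

definition partition_sums :: "(real \<Rightarrow> 'b::metric_space) \<Rightarrow> real \<Rightarrow> real \<Rightarrow> real set" where
  "partition_sums p a b =
     {(\<Sum>i<n. dist (p (t i)) (p (t (Suc i)))) | t n.
        t 0 = a \<and> t n = b \<and> (\<forall>i<n. t i \<le> t (Suc i))}"

definition path_length :: "(real \<Rightarrow> 'b::metric_space) \<Rightarrow> real \<Rightarrow> real \<Rightarrow> ereal" where
  "path_length p a b = (SUP s \<in> partition_sums p a b. ereal s)"

definition rectifiable_path :: "(real \<Rightarrow> 'b::metric_space) \<Rightarrow> bool" where
  "rectifiable_path p \<longleftrightarrow> path p \<and> path_length p 0 1 < \<infinity>"

definition lower_deriv :: "('a::metric_space \<Rightarrow> 'b::metric_space) \<Rightarrow> 'a \<Rightarrow> ereal" where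
  "lower_deriv f x = Liminf (at x) (\<lambda>z. ereal (dist (f z) (f x) / dist z x))"

definition continuation_property ::
  "('a::metric_space \<Rightarrow> 'b::metric_space) \<Rightarrow> (real \<Rightarrow> 'b) \<Rightarrow> bool" where
  "continuation_property f p \<longleftrightarrow>
     (\<forall>b \<in> {0<..1}. \<forall>q. continuous_on {0..<b} q \<and> (\<forall>t \<in> {0..<b}. f (q t) = p t) \<longrightarrow>
        (\<exists>tn. (\<forall>n. tn n \<in> {0..<b}) \<and> tn \<longlonglongrightarrow> b \<and> convergent (\<lambda>n. q (tn n))))"

definition bounded_path_lifting ::
  "('a::metric_space \<Rightarrow> 'b::metric_space) \<Rightarrow> (real \<Rightarrow> 'b) \<Rightarrow> bool" where
  "bounded_path_lifting f p \<longleftrightarrow>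
     (\<forall>b \<in> {0<..1}. \<forall>q. continuous_on {0..<b} q \<and> (\<forall>t \<in> {0..<b}. f (q t) = p t) \<longrightarrow>
        (\<exists>\<alpha>>0. (INF x \<in> q ` {0..<b}. lower_deriv f x) \<ge> ereal \<alpha>))"

definition locally_R_contractible :: "'b::metric_space set \<Rightarrow> bool" where
  "locally_R_contractible Y \<longleftrightarrow>
     (\<forall>y0 \<in> Y. \<exists>U H. open U \<and> U \<subseteq> Y \<and> y0 \<in> U \<and>
        continuous_on (U \<times> {0..1}) H \<and> H ` (U \<times> {0..1}) \<subseteq> U \<and>
        (\<forall>t \<in> {0..1}. H (y0, t) = y0) \<and>
        (\<forall>y \<in> U. H (y, 0) = y0 \<and> H (y, 1) = y) \<and>
        (\<forall>y \<in> U. rectifiable_path (\<lambda>t. H (y, t))))"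

definition local_homeomorphism :: "('a::topological_space \<Rightarrow> 'b::topological_space) \<Rightarrow> bool" where
  "local_homeomorphism f \<longleftrightarrow>
     (\<forall>x. \<exists>T U g. x \<in> T \<and> open T \<and> open U \<and> homeomorphism T U f g)"

end

theory Submission
  imports Defs
begin

(* If D\<^sup>- f \<ge> \<alpha> > 0 along a lift q of a rectifiable path p, a real-induction argument bounds
   \<alpha> * d(q s, q t) by the length of p on [s, t].  Since the length of p from 0 converges as t
   tends to b, q(t) is Cauchy and converges in the complete space X.
   For the covering statement, the continuation property lets a lift on [0, \<tau>) be pushed
   through a sheet of f beyond \<tau>, so every rectifiable path lifts.  Over a neighbourhood U of y0
   with a rectifiable contraction H, lifting the paths H(y, -) from the points over y0 gives
   continuous sections of f over U; their images are disjoint open sheets covering f\<^sup>-\<^sup>1 U.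
   Surjectivity follows because the image of f is open and, by the same lifting, closed. *)

lemma dist_in_partition_sums: "a \<le> b \<Longrightarrow> dist (p a) (p b) \<in> partition_sums p a b"
  unfolding partition_sums_def
  by (rule CollectI, rule exI[of _ "\<lambda>i. if i = 0 then a else b"], rule exI[of _ 1]) auto

lemma partition_sums_concat:
  assumes "s1 \<in> partition_sums p a b" "s2 \<in> partition_sums p b c"
  shows "s1 + s2 \<in> partition_sums p a c"
proof -
  obtain t1 n1 where t1: "s1 = (\<Sum>i<n1. dist (p (t1 i)) (p (t1 (Suc i))))" "t1 0 = a" "t1 n1 = b"
    "\<forall>i<n1. t1 i \<le> t1 (Suc i)"
    using assms(1) unfolding partition_sums_def by blast
  obtain t2 n2 where t2: "s2 = (\<Sum>i<n2. dist (p (t2 i)) (p (t2 (Suc i))))" "t2 0 = b" "t2 n2 = c"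
    "\<forall>i<n2. t2 i \<le> t2 (Suc i)"
    using assms(2) unfolding partition_sums_def by blast
  define t where "t i = (if i \<le> n1 then t1 i else t2 (i - n1))" for i
  have t_shift: "t (n1 + i) = t2 i" for i
    using t1(3) t2(2) by (auto simp: t_def)
  have sum_split: "(\<Sum>i<n1+n. g i) = (\<Sum>i<n1. g i) + (\<Sum>i<n. g (n1 + i))" for g :: "nat \<Rightarrow> real" and n
    by (induct n) (auto simp: add.assoc)
  have "(\<Sum>i<n1. dist (p (t i)) (p (t (Suc i)))) = s1"
    unfolding t1(1) by (intro sum.cong) (auto simp: t_def)
  moreover have "(\<Sum>i<n2. dist (p (t (n1 + i))) (p (t (Suc (n1 + i))))) = s2"
    unfolding t2(1) using t_shift[of "Suc _"] by (simp add: t_shift)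
  ultimately have "s1 + s2 = (\<Sum>i<n1+n2. dist (p (t i)) (p (t (Suc i))))"
    unfolding sum_split by simp
  moreover have "\<forall>i<n1+n2. t i \<le> t (Suc i)"
  proof (intro allI impI)
    fix i assume i: "i < n1 + n2"
    show "t i \<le> t (Suc i)"
    proof (cases "i < n1")
      case True
      then show ?thesis using t1(4) by (auto simp: t_def)
    next
      case False
      then obtain k where "i = n1 + k" "k < n2" using i by (metis add_less_cancel_left le_Suc_ex not_less)
      then show ?thesis using t2(4) t_shift[of k] t_shift[of "Suc k"] by simp
    qed
  qed
  moreover have "t 0 = a" "t (n1 + n2) = c" using t1(2) t_shift[of n2] t2(3) by (auto simp: t_def)
  ultimately show ?thesis unfolding partition_sums_def
    by (intro CollectI exI[of _ t] exI[of _ "n1 + n2"] conjI) assumption+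
qed

(* Real-valued counterpart of path_length; only meaningful when partition_sums p a b is bounded,
   e.g. for rectifiable p and 0 \<le> a \<le> b \<le> 1. *)
definition arc_length :: "(real \<Rightarrow> 'b::metric_space) \<Rightarrow> real \<Rightarrow> real \<Rightarrow> real" where
  "arc_length p a b = Sup (partition_sums p a b)"

lemma bdd_above_partition_sums:
  assumes "rectifiable_path p" "0 \<le> a" "a \<le> b" "b \<le> 1"
  shows "bdd_above (partition_sums p a b)"
proof -
  have "path_length p 0 1 < \<infinity>" using assms(1) unfolding rectifiable_path_def by simp
  then obtain n :: nat where n: "path_length p 0 1 < ereal (real n)"
    using less_PInf_Ex_of_nat[of "path_length p 0 1"] by force
  have "s \<le> real n" if "s \<in> partition_sums p a b" for s
  proof -
    have "dist (p 0) (p a) + s + dist (p b) (p 1) \<in> partition_sums p 0 1"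
      using assms by (intro partition_sums_concat[OF partition_sums_concat[OF _ that]] dist_in_partition_sums) auto
    then have "ereal (dist (p 0) (p a) + s + dist (p b) (p 1)) \<le> path_length p 0 1"
      unfolding path_length_def by (rule SUP_upper)
    then have "ereal (dist (p 0) (p a) + s + dist (p b) (p 1)) < ereal (real n)"
      using n by (rule le_less_trans)
    then have "dist (p 0) (p a) + s + dist (p b) (p 1) < real n" by simp
    then show ?thesis using zero_le_dist[of "p 0" "p a"] zero_le_dist[of "p b" "p 1"] by linarith
  qed
  then show ?thesis by (auto simp: bdd_above_def)
qed

context
  fixes p :: "real \<Rightarrow> 'b::metric_space"
  assumes p: "rectifiable_path p"
begin

lemma partition_sums_le_arc_length:
  "\<lbrakk>0 \<le> a; a \<le> b; b \<le> 1; s \<in> partition_sums p a b\<rbrakk> \<Longrightarrow> s \<le> arc_length p a b"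
  unfolding arc_length_def by (rule cSup_upper) (simp_all add: bdd_above_partition_sums[OF p])

lemma dist_le_arc_length: "\<lbrakk>0 \<le> a; a \<le> b; b \<le> 1\<rbrakk> \<Longrightarrow> dist (p a) (p b) \<le> arc_length p a b"
  by (simp add: partition_sums_le_arc_length dist_in_partition_sums)

lemma arc_length_superadditive:
  assumes "0 \<le> a" "a \<le> b" "b \<le> c" "c \<le> 1"
  shows "arc_length p a b + arc_length p b c \<le> arc_length p a c"
proof -
  have ne: "partition_sums p u v \<noteq> {}" if "u \<le> v" for u v
    using dist_in_partition_sums[OF that] by blast
  have sum_le: "s1 \<le> arc_length p a c - s2"
    if "s1 \<in> partition_sums p a b" "s2 \<in> partition_sums p b c" for s1 s2
  proof -
    have "s1 + s2 \<le> arc_length p a c"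
      using assms by (intro partition_sums_le_arc_length partition_sums_concat[OF that]) auto
    then show ?thesis by simp
  qed
  have "arc_length p a b \<le> arc_length p a c - s2" if "s2 \<in> partition_sums p b c" for s2
    unfolding arc_length_def[of p a b] using ne[OF assms(2)] by (rule cSup_least) (rule sum_le[OF _ that])
  then have "s2 \<le> arc_length p a c - arc_length p a b" if "s2 \<in> partition_sums p b c" for s2
    using that by fastforce
  then have "arc_length p b c \<le> arc_length p a c - arc_length p a b"
    unfolding arc_length_def[of p b c] using ne[OF assms(3)] by (rule cSup_least[rotated])
  then show ?thesis by simp
qed

lemma scaled_dist_le_arc_length_trans:
  assumes "\<alpha> \<ge> 0" "0 \<le> s" "s \<le> u" "u \<le> v" "v \<le> 1"
    and "\<alpha> * dist (q s) (q u) \<le> arc_length p s u" "\<alpha> * dist (q u) (q v) \<le> dist (p u) (p v)"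
  shows "\<alpha> * dist (q s) (q v) \<le> arc_length p s v"
proof -
  have "\<alpha> * dist (q s) (q v) \<le> \<alpha> * dist (q s) (q u) + \<alpha> * dist (q u) (q v)"
    using mult_left_mono[OF dist_triangle[of "q s" "q v" "q u"] \<open>\<alpha> \<ge> 0\<close>] by (simp add: distrib_left)
  also have "\<dots> \<le> arc_length p s u + arc_length p u v"
    using assms dist_le_arc_length[of u v] by linarith
  also have "\<dots> \<le> arc_length p s v"
    using assms by (intro arc_length_superadditive) auto
  finally show ?thesis .
qed

end

lemma lower_deriv_gt_imp_local_bound:
  assumes "ereal \<beta> < lower_deriv f x"
  shows "\<exists>r>0. \<forall>z. dist z x < r \<longrightarrow> \<beta> * dist z x \<le> dist (f z) (f x)"
proof -
  from assms have "ereal \<beta> < Liminf (at x) (\<lambda>z. ereal (dist (f z) (f x) / dist z x))"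
    unfolding lower_deriv_def .
  then have "eventually (\<lambda>z. ereal \<beta> < ereal (dist (f z) (f x) / dist z x)) (at x)"
    by (rule le_Liminf_iff[THEN iffD1, OF order_refl, rule_format])
  then obtain r where "r > 0" and r: "\<forall>z. z \<noteq> x \<and> dist z x < r \<longrightarrow> \<beta> < dist (f z) (f x) / dist z x"
    unfolding eventually_at by auto
  have "\<beta> * dist z x \<le> dist (f z) (f x)" if "dist z x < r" for z
  proof (cases "z = x")
    case False
    then show ?thesis using r that by (simp add: pos_less_divide_eq less_imp_le)
  qed simp
  with \<open>r > 0\<close> show ?thesis by blast
qed

lemma scaled_dist_le_arc_length:
  fixes q :: "real \<Rightarrow> 'a::metric_space"
  assumes p: "rectifiable_path p" and "b \<le> 1" and "\<alpha> \<ge> 0"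
    and dominated: "\<And>\<tau>. \<tau> \<in> {0..<b} \<Longrightarrow>
      \<exists>\<delta>>0. \<forall>u\<in>{0..<b}. \<bar>u - \<tau>\<bar> < \<delta> \<longrightarrow> \<alpha> * dist (q u) (q \<tau>) \<le> dist (p u) (p \<tau>)"
    and "0 \<le> s" "s \<le> t" "t < b"
  shows "\<alpha> * dist (q s) (q t) \<le> arc_length p s t"
proof (rule ccontr)
  \<comment> \<open>The estimate holds at the infimum \<tau> of the points where it fails (approach \<tau> from the
    left), and local domination at \<tau> extends it to a right neighbourhood of \<tau>.\<close>
  define good where "good u \<longleftrightarrow> \<alpha> * dist (q s) (q u) \<le> arc_length p s u" for u
  have extend: "good v" if "good u" "s \<le> u" "u \<le> v" "v < b" "\<alpha> * dist (q u) (q v) \<le> dist (p u) (p v)" for u v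
    using that \<open>b \<le> 1\<close> unfolding good_def
    by (intro scaled_dist_le_arc_length_trans[OF p \<open>\<alpha> \<ge> 0\<close> \<open>0 \<le> s\<close>, of u v q]) auto
  define A where "A = {u. s \<le> u \<and> u < b \<and> \<not> good u}"
  assume "\<not> \<alpha> * dist (q s) (q t) \<le> arc_length p s t"
  then have "t \<in> A" using assms unfolding A_def good_def by auto
  have bdd: "bdd_below A" unfolding A_def by (auto intro: bdd_belowI[of _ s])
  define \<tau> where "\<tau> = Inf A"
  have "\<tau> \<le> t" unfolding \<tau>_def using \<open>t \<in> A\<close> bdd by (rule cInf_lower)
  have "s \<le> \<tau>" unfolding \<tau>_def using \<open>t \<in> A\<close> by (intro cInf_greatest) (auto simp: A_def)
  have good_below: "good u" if "s \<le> u" "u < \<tau>" for u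
  proof (rule ccontr)
    assume "\<not> good u"
    then have "u \<in> A" using that \<open>\<tau> \<le> t\<close> \<open>t < b\<close> unfolding A_def by auto
    then have "\<tau> \<le> u" unfolding \<tau>_def using bdd by (rule cInf_lower)
    then show False using that by linarith
  qed
  have "\<tau> \<in> {0..<b}" using \<open>s \<le> \<tau>\<close> \<open>\<tau> \<le> t\<close> assms by auto
  then obtain \<delta> where "\<delta> > 0"
    and \<delta>: "\<forall>u\<in>{0..<b}. \<bar>u - \<tau>\<bar> < \<delta> \<longrightarrow> \<alpha> * dist (q u) (q \<tau>) \<le> dist (p u) (p \<tau>)"
    using dominated by blast
  have "good \<tau>"
  proof (cases "\<tau> = s")
    case True
    then show ?thesis using dist_le_arc_length[OF p, of s s] assms unfolding good_def by simp
  next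
    case False
    define u where "u = max s (\<tau> - \<delta>/2)"
    have u: "s \<le> u" "u < \<tau>" "\<bar>u - \<tau>\<bar> < \<delta>" "u \<in> {0..<b}"
      using False \<open>s \<le> \<tau>\<close> \<open>\<delta> > 0\<close> \<open>\<tau> \<in> {0..<b}\<close> assms(5) unfolding u_def by auto
    show ?thesis
      using extend[OF good_below[OF u(1,2)] u(1) less_imp_le[OF u(2)]] \<delta> u \<open>\<tau> \<in> {0..<b}\<close> by simp
  qed
  have "v \<notin> A" if "\<tau> \<le> v" "v < \<tau> + \<delta>" for v
  proof
    assume "v \<in> A"
    then have v: "v \<in> {0..<b}" "\<bar>v - \<tau>\<bar> < \<delta>" using that assms(5) unfolding A_def by auto
    have "\<alpha> * dist (q \<tau>) (q v) \<le> dist (p \<tau>) (p v)"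
      using \<delta>[rule_format, OF v] by (simp add: dist_commute)
    then have "good v"
      using extend[OF \<open>good \<tau>\<close> \<open>s \<le> \<tau>\<close> that(1)] \<open>v \<in> {0..<b}\<close> by simp
    then show False using \<open>v \<in> A\<close> unfolding A_def by simp
  qed
  moreover obtain v where "v \<in> A" "v < \<tau> + \<delta>"
    using cInf_less_iff[OF _ bdd, of "\<tau> + \<delta>"] \<open>t \<in> A\<close> \<open>\<delta> > 0\<close> unfolding \<tau>_def by auto
  moreover have "\<tau> \<le> v" unfolding \<tau>_def using \<open>v \<in> A\<close> bdd by (rule cInf_lower)
  ultimately show False by blast
qed

lemma Cauchy_if_scaled_dist_le:
  assumes "Cauchy y" "\<And>m n. c * dist (x m) (x n) \<le> dist (y m) (y n)" "c > 0"
  shows "Cauchy x"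
proof (rule metric_CauchyI)
  fix e :: real assume "e > 0"
  then obtain M where M: "\<forall>m\<ge>M. \<forall>n\<ge>M. dist (y m) (y n) < c * e"
    using metric_CauchyD[OF assms(1), of "c * e"] \<open>c > 0\<close> by auto
  have "dist (x m) (x n) < e" if "m \<ge> M" "n \<ge> M" for m n
  proof -
    have "c * dist (x m) (x n) < c * e" using M assms(2)[of m n] that by (meson le_less_trans)
    then show ?thesis using \<open>c > 0\<close> by simp
  qed
  then show "\<exists>M. \<forall>m\<ge>M. \<forall>n\<ge>M. dist (x m) (x n) < e" by blast
qed

lemma lift_locally_dominated:
  fixes q :: "real \<Rightarrow> 'a::metric_space"
  assumes "continuous_on S q" "\<And>t. t \<in> S \<Longrightarrow> f (q t) = p t"
    and "\<tau> \<in> S" "ereal \<beta> < lower_deriv f (q \<tau>)"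
  shows "\<exists>\<delta>>0. \<forall>u\<in>S. \<bar>u - \<tau>\<bar> < \<delta> \<longrightarrow> \<beta> * dist (q u) (q \<tau>) \<le> dist (p u) (p \<tau>)"
proof -
  obtain r where "r > 0" and r: "\<forall>z. dist z (q \<tau>) < r \<longrightarrow> \<beta> * dist z (q \<tau>) \<le> dist (f z) (f (q \<tau>))"
    using lower_deriv_gt_imp_local_bound[OF assms(4)] by blast
  obtain \<delta> where "\<delta> > 0" and \<delta>: "\<forall>u\<in>S. dist u \<tau> < \<delta> \<longrightarrow> dist (q u) (q \<tau>) < r"
    using continuous_on_iff[THEN iffD1, rule_format, OF assms(1,3) \<open>r > 0\<close>] by blast
  have "\<beta> * dist (q u) (q \<tau>) \<le> dist (p u) (p \<tau>)" if "u \<in> S" "\<bar>u - \<tau>\<bar> < \<delta>" for u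
  proof -
    have "dist (q u) (q \<tau>) < r" using \<delta> that by (simp add: dist_real_def)
    then show ?thesis using r[rule_format, of "q u"] assms(2) that(1) \<open>\<tau> \<in> S\<close> by simp
  qed
  with \<open>\<delta> > 0\<close> show ?thesis by blast
qed

lemma Cauchy_along_incseq_if_arc_length_bound:
  fixes q :: "real \<Rightarrow> 'a::metric_space"
  assumes p: "rectifiable_path p" and "b \<le> 1" "c > 0"
    and bound: "\<And>s t. 0 \<le> s \<Longrightarrow> s \<le> t \<Longrightarrow> t < b \<Longrightarrow> c * dist (q s) (q t) \<le> arc_length p s t"
    and "incseq tn" and tn: "\<And>n. tn n \<in> {0..<b}"
  shows "Cauchy (\<lambda>n. q (tn n))"
proof -
  define \<phi> where "\<phi> t = arc_length p 0 t" for t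
  have est: "c * dist (q s) (q t) \<le> \<phi> t - \<phi> s" if "0 \<le> s" "s \<le> t" "t < b" for s t
    using bound[OF that] arc_length_superadditive[OF p, of 0 s t] that \<open>b \<le> 1\<close> unfolding \<phi>_def by simp
  have "\<phi> s \<le> \<phi> t" if "0 \<le> s" "s \<le> t" "t < b" for s t
  proof -
    have "0 \<le> c * dist (q s) (q t)" using \<open>c > 0\<close> by simp
    then show ?thesis using est[OF that] by linarith
  qed
  then have "incseq (\<lambda>n. \<phi> (tn n))"
    using tn \<open>incseq tn\<close> by (auto simp: incseq_def)
  moreover have "\<phi> (tn n) \<le> \<phi> 1" for n
  proof -
    have "0 \<le> tn n" "tn n \<le> 1" using tn[of n] \<open>b \<le> 1\<close> by auto
    then show ?thesis
      using arc_length_superadditive[OF p, of 0 "tn n" 1] dist_le_arc_length[OF p, of "tn n" 1]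
        zero_le_dist[of "p (tn n)" "p 1"] unfolding \<phi>_def by linarith
  qed
  ultimately have "(\<lambda>n. \<phi> (tn n)) \<longlonglongrightarrow> (SUP n. \<phi> (tn n))"
    by (intro LIMSEQ_incseq_SUP) (auto simp: bdd_above_def)
  then have "Cauchy (\<lambda>n. \<phi> (tn n))" by (rule LIMSEQ_imp_Cauchy)
  moreover have "c * dist (q (tn m)) (q (tn n)) \<le> dist (\<phi> (tn m)) (\<phi> (tn n))" for m n
  proof -
    have ordered: "c * dist (q (tn i)) (q (tn j)) \<le> dist (\<phi> (tn i)) (\<phi> (tn j))" if "tn i \<le> tn j" for i j
    proof -
      have "c * dist (q (tn i)) (q (tn j)) \<le> \<phi> (tn j) - \<phi> (tn i)"
        using est[of "tn i" "tn j"] tn[of i] tn[of j] that by simp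
      also have "\<dots> \<le> dist (\<phi> (tn i)) (\<phi> (tn j))" by (simp add: dist_real_def abs_real_def)
      finally show ?thesis .
    qed
    show ?thesis
    proof (cases "tn m \<le> tn n")
      case False
      then show ?thesis using ordered[of n m] by (simp add: dist_commute)
    qed (rule ordered)
  qed
  ultimately show ?thesis using \<open>c > 0\<close> by (rule Cauchy_if_scaled_dist_le)
qed

lemma continuation_property_if_bounded_path_lifting:
  fixes f :: "'a::metric_space \<Rightarrow> 'b::metric_space"
  assumes p: "rectifiable_path p" and "bounded_path_lifting f p" and "complete (UNIV :: 'a set)"
  shows "continuation_property f p"
  unfolding continuation_property_def
proof (intro ballI allI impI)
  fix b and q :: "real \<Rightarrow> 'a"
  assume b: "b \<in> {0<..1}" and q: "continuous_on {0..<b} q \<and> (\<forall>t\<in>{0..<b}. f (q t) = p t)"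
  then obtain \<alpha> where "\<alpha> > 0" and \<alpha>: "ereal \<alpha> \<le> (INF x\<in>q ` {0..<b}. lower_deriv f x)"
    using assms(2) unfolding bounded_path_lifting_def by blast
  from q have cq: "continuous_on {0..<b} q" and lift: "\<And>t. t \<in> {0..<b} \<Longrightarrow> f (q t) = p t" by auto
  have below: "ereal (\<alpha>/2) < lower_deriv f (q \<tau>)" if "\<tau> \<in> {0..<b}" for \<tau>
  proof -
    have "ereal (\<alpha>/2) < ereal \<alpha>" using \<open>\<alpha> > 0\<close> by simp
    also have "\<dots> \<le> lower_deriv f (q \<tau>)"
      using \<alpha> INF_lower[of "q \<tau>" "q ` {0..<b}" "lower_deriv f"] that by force
    finally show ?thesis .
  qed
  have "\<exists>\<delta>>0. \<forall>u\<in>{0..<b}. \<bar>u - \<tau>\<bar> < \<delta> \<longrightarrow> \<alpha>/2 * dist (q u) (q \<tau>) \<le> dist (p u) (p \<tau>)"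
    if "\<tau> \<in> {0..<b}" for \<tau>
    using lift_locally_dominated[OF cq lift that below[OF that]] .
  then have bound: "\<alpha>/2 * dist (q s) (q t) \<le> arc_length p s t" if "0 \<le> s" "s \<le> t" "t < b" for s t
    using b \<open>\<alpha> > 0\<close> by (intro scaled_dist_le_arc_length[OF p _ _ _ that]) auto
  define tn where "tn n = b - b / real (Suc n)" for n
  have tn: "tn n \<in> {0..<b}" for n
    using b unfolding tn_def by (auto simp: field_simps)
  have "incseq tn"
    using b unfolding tn_def by (intro incseq_SucI) (simp add: frac_le)
  have "(\<lambda>n. b / real (Suc n)) \<longlonglongrightarrow> 0"
    by (rule LIMSEQ_Suc[OF lim_const_over_n])
  from tendsto_diff[OF tendsto_const this] have "tn \<longlonglongrightarrow> b"
    unfolding tn_def[abs_def] by simp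
  have "Cauchy (\<lambda>n. q (tn n))"
    using b \<open>\<alpha> > 0\<close> by (intro Cauchy_along_incseq_if_arc_length_bound[OF p _ _ bound \<open>incseq tn\<close> tn]) auto
  then obtain l where "(\<lambda>n. q (tn n)) \<longlonglongrightarrow> l"
    using assms(3) unfolding complete_def by blast
  then have "convergent (\<lambda>n. q (tn n))" unfolding convergent_def by blast
  then show "\<exists>tn. (\<forall>n. tn n \<in> {0..<b}) \<and> tn \<longlonglongrightarrow> b \<and> convergent (\<lambda>n. q (tn n))"
    using tn \<open>tn \<longlonglongrightarrow> b\<close> by blast
qed

definition is_lift ::
    "('a::topological_space \<Rightarrow> 'b) \<Rightarrow> real set \<Rightarrow> (real \<Rightarrow> 'b) \<Rightarrow> (real \<Rightarrow> 'a) \<Rightarrow> bool"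
  where "is_lift f S p q \<longleftrightarrow> continuous_on S q \<and> (\<forall>t\<in>S. f (q t) = p t)"

lemma is_lift_subset: "is_lift f S p q \<Longrightarrow> T \<subseteq> S \<Longrightarrow> is_lift f T p q"
  unfolding is_lift_def by (blast intro: continuous_on_subset)

lemma local_homeomorphism_eq_if_eq_at_point:
  fixes f :: "'a::metric_space \<Rightarrow> 'b::topological_space" and g h :: "'c::topological_space \<Rightarrow> 'a"
  assumes f: "local_homeomorphism f" and "connected S"
    and "continuous_on S g" "continuous_on S h" and same_image: "\<And>t. t \<in> S \<Longrightarrow> f (g t) = f (h t)"
    and "a \<in> S" "g a = h a" "t \<in> S"
  shows "g t = h t"
proof -
  define E where "E = {t \<in> S. g t = h t}"
  have "closedin (top_of_set S) E"
    using closedin_continuous_maps_eq[of euclidean "top_of_set S" g h] assms(3,4)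
    unfolding E_def by simp
  moreover have "openin (top_of_set S) E"
  proof (subst openin_subopen, intro ballI)
    fix c assume "c \<in> E"
    obtain T V k where "g c \<in> T" "open T" "homeomorphism T V f k"
      using f unfolding local_homeomorphism_def by blast
    define N where "N = (S \<inter> g -` T) \<inter> (S \<inter> h -` T)"
    have "openin (top_of_set S) N"
      unfolding N_def using assms(3,4) \<open>open T\<close> by (intro openin_Int continuous_openin_preimage_gen)
    moreover have "c \<in> N" using \<open>c \<in> E\<close> \<open>g c \<in> T\<close> unfolding N_def E_def by auto
    moreover have "N \<subseteq> E"
    proof
      fix u assume "u \<in> N"
      then have "g u \<in> T" "h u \<in> T" "u \<in> S" unfolding N_def by auto
      then have "g u = h u"
        using homeomorphism_apply1[OF \<open>homeomorphism T V f k\<close>] same_image by metis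
      then show "u \<in> E" using \<open>u \<in> S\<close> unfolding E_def by blast
    qed
    ultimately show "\<exists>N. openin (top_of_set S) N \<and> c \<in> N \<and> N \<subseteq> E" by blast
  qed
  moreover have "E \<noteq> {}" using assms(6,7) unfolding E_def by blast
  ultimately have "E = S" using \<open>connected S\<close> unfolding connected_clopen by blast
  then show ?thesis using \<open>t \<in> S\<close> unfolding E_def by blast
qed

lemma lift_unique:
  fixes f :: "'a::metric_space \<Rightarrow> 'b::topological_space"
  assumes "local_homeomorphism f" "connected S" "is_lift f S p q" "is_lift f S p r"
    and "a \<in> S" "q a = r a" "t \<in> S"
  shows "q t = r t"
  by (rule local_homeomorphism_eq_if_eq_at_point[OF assms(1,2), where g=q and h=r and a=a and t=t])
    (use assms(3-7) in \<open>auto simp: is_lift_def\<close>)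

lemma lift_eq_on_sheet:
  fixes f :: "'a::metric_space \<Rightarrow> 'b::topological_space"
  assumes "local_homeomorphism f" "homeomorphism T V f g" "connected I"
    and "is_lift f I p q" "continuous_on I p" "p ` I \<subseteq> V" "s \<in> I" "q s \<in> T" "t \<in> I"
  shows "q t = g (p t)"
proof (rule local_homeomorphism_eq_if_eq_at_point[OF assms(1,3) _ _ _ assms(7) _ assms(9)])
  show "continuous_on I q" using assms(4) unfolding is_lift_def by blast
  show "continuous_on I (\<lambda>t. g (p t))"
    using continuous_on_compose2[OF homeomorphism_cont2[OF assms(2)] assms(5,6)] .
  show "f (q u) = f (g (p u))" if "u \<in> I" for u
    using assms(2,4,6) that unfolding is_lift_def homeomorphism_def by auto
  show "q s = g (p s)"
    using assms(2,4,7,8) unfolding is_lift_def homeomorphism_def by auto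
qed

lemma lift_extend_through_sheet:
  assumes "homeomorphism T V f g" "is_lift f {0..s} p q" "q s \<in> T"
    and "continuous_on {s..c} p" "p ` {s..c} \<subseteq> V" "0 \<le> s" "s \<le> c"
  shows "\<exists>q'. is_lift f {0..c} p q' \<and> q' 0 = q 0"
proof (intro exI conjI)
  let ?q = "\<lambda>t. if t \<le> s then q t else g (p t)"
  have "{t \<in> {0..c}. t \<le> s} = {0..s}" "{t \<in> {0..c}. s \<le> t} = {s..c}"
    using assms(6,7) by auto
  then have "continuous_on {0..c} ?q"
    using assms(2,3) homeomorphism_apply1[OF assms(1) assms(3)]
      continuous_on_compose2[OF homeomorphism_cont2[OF assms(1)] assms(4,5)] assms(6)
    by (intro continuous_on_cases_le continuous_on_id) (auto simp: is_lift_def)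
  moreover have "f (?q t) = p t" if "t \<in> {0..c}" for t
  proof (cases "t \<le> s")
    case False
    then have "p t \<in> V" using assms(5) that by auto
    then show ?thesis using False homeomorphism_apply2[OF assms(1)] by simp
  qed (use assms(2) that in \<open>auto simp: is_lift_def\<close>)
  ultimately show "is_lift f {0..c} p ?q" unfolding is_lift_def by blast
  show "?q 0 = q 0" using assms(6) by simp
qed

lemma continuous_on_atLeastLessThan_if_atLeastAtMost:
  fixes g :: "real \<Rightarrow> 'a::topological_space"
  assumes "\<And>c. a \<le> c \<Longrightarrow> c < b \<Longrightarrow> continuous_on {a..c} g"
  shows "continuous_on {a..<b} g"
  unfolding continuous_on_eq_continuous_within
proof
  fix t assume t: "t \<in> {a..<b}"
  define c where "c = (t + b) / 2"
  have "at t within {a..<b} = at t within {a..c}"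
    by (rule at_within_nhd[where S="{..<c}"]) (use t in \<open>auto simp: c_def\<close>)
  moreover have "continuous (at t within {a..c}) g"
    using assms[of c] t unfolding c_def by (simp add: continuous_on_eq_continuous_within)
  ultimately show "continuous (at t within {a..<b}) g" by simp
qed

lemma lift_on_atLeastLessThan:
  fixes f :: "'a::metric_space \<Rightarrow> 'b::topological_space"
  assumes f: "local_homeomorphism f" and "0 < \<tau>"
    and lifts: "\<And>c. c \<in> {0..<\<tau>} \<Longrightarrow> \<exists>q. is_lift f {0..c} p q \<and> q 0 = x"
  shows "\<exists>Q. is_lift f {0..<\<tau>} p Q \<and> Q 0 = x"
proof -
  define L where "L c = (SOME q. is_lift f {0..c} p q \<and> q 0 = x)" for c
  have L: "is_lift f {0..c} p (L c) \<and> L c 0 = x" if "c \<in> {0..<\<tau>}" for c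
    unfolding L_def using lifts[OF that] by (rule someI_ex)
  have agree: "L c u = L u u" if "c \<in> {0..<\<tau>}" "u \<in> {0..c}" for c u
  proof (rule lift_unique[OF f connected_Icc[of 0 u], where q="L c" and r="L u" and a=0 and t=u])
    have "u \<in> {0..<\<tau>}" "{0..u} \<subseteq> {0..c}" using that by auto
    then show "is_lift f {0..u} p (L c)" "is_lift f {0..u} p (L u)"
      using L that(1) is_lift_subset by blast+
    show "L c 0 = L u 0" using L that \<open>u \<in> {0..<\<tau>}\<close> by simp
  qed (use that in auto)
  define Q where "Q u = L u u" for u
  have "continuous_on {0..c} Q" if "0 \<le> c" "c < \<tau>" for c
  proof -
    have "continuous_on {0..c} (L c)" using L[of c] that unfolding is_lift_def by auto
    then show ?thesis
      by (rule continuous_on_eq) (use agree[of c] that in \<open>auto simp: Q_def\<close>)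
  qed
  then have "continuous_on {0..<\<tau>} Q"
    by (rule continuous_on_atLeastLessThan_if_atLeastAtMost)
  moreover have "f (Q u) = p u" if "u \<in> {0..<\<tau>}" for u
    using L[OF that] that unfolding Q_def is_lift_def by auto
  moreover have "Q 0 = x" using L[of 0] \<open>0 < \<tau>\<close> unfolding Q_def by auto
  ultimately show ?thesis unfolding is_lift_def by blast
qed

lemma lift_approaches_sheet:
  fixes f :: "'a::metric_space \<Rightarrow> 'b::metric_space"
  assumes f: "local_homeomorphism f" "continuous_on UNIV f"
    and p: "path p" "continuation_property f p"
    and \<tau>: "\<tau> \<in> {0<..1}" and Q: "is_lift f {0..<\<tau>} p Q"
  shows "\<exists>T V g. homeomorphism T V f g \<and> open V \<and> p \<tau> \<in> V \<and>
           (\<forall>\<delta>>0. \<exists>s\<in>{0..<\<tau>}. \<tau> - \<delta> < s \<and> Q s \<in> T)"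
proof -
  obtain tn where tn: "\<forall>n. tn n \<in> {0..<\<tau>}" "tn \<longlonglongrightarrow> \<tau>" "convergent (\<lambda>n. Q (tn n))"
    using p(2) \<tau> Q unfolding continuation_property_def is_lift_def by blast
  then obtain z where z: "(\<lambda>n. Q (tn n)) \<longlonglongrightarrow> z" unfolding convergent_def by blast
  have "isCont f z" using f(2) by (simp add: continuous_on_eq_continuous_at)
  then have "(\<lambda>n. f (Q (tn n))) \<longlonglongrightarrow> f z" using z by (rule isCont_tendsto_compose)
  moreover have "(\<lambda>n. f (Q (tn n))) \<longlonglongrightarrow> p \<tau>"
  proof -
    have "(\<lambda>n. p (tn n)) \<longlonglongrightarrow> p \<tau>"
    proof (rule continuous_on_tendsto_compose[OF p(1)[unfolded path_def] tn(2)])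
      have "tn n \<in> {0..1}" for n using tn(1) \<tau> by (auto intro: less_imp_le less_le_trans)
      then show "\<forall>\<^sub>F n in sequentially. tn n \<in> {0..1}" by (rule always_eventually[OF allI])
    qed (use \<tau> in auto)
    moreover have "f (Q (tn n)) = p (tn n)" for n using Q tn(1) unfolding is_lift_def by blast
    ultimately show ?thesis by simp
  qed
  ultimately have "f z = p \<tau>" by (rule LIMSEQ_unique)
  obtain T V g where "z \<in> T" "open T" "open V" "homeomorphism T V f g"
    using f(1) unfolding local_homeomorphism_def by blast
  have "p \<tau> \<in> V"
    using \<open>z \<in> T\<close> \<open>f z = p \<tau>\<close> homeomorphism_image1[OF \<open>homeomorphism T V f g\<close>] by (metis imageI)
  moreover have "\<exists>s\<in>{0..<\<tau>}. \<tau> - \<delta> < s \<and> Q s \<in> T" if "\<delta> > 0" for \<delta>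
  proof -
    have "eventually (\<lambda>n. Q (tn n) \<in> T) sequentially"
      using z \<open>open T\<close> \<open>z \<in> T\<close> by (rule topological_tendstoD)
    moreover have "eventually (\<lambda>n. \<tau> - \<delta> < tn n) sequentially"
      using tn(2) by (rule order_tendstoD) (simp add: that)
    ultimately have "eventually (\<lambda>n. Q (tn n) \<in> T \<and> \<tau> - \<delta> < tn n) sequentially"
      by (rule eventually_conj)
    then obtain n where "Q (tn n) \<in> T" "\<tau> - \<delta> < tn n"
      unfolding eventually_sequentially by blast
    then show ?thesis using tn(1) by blast
  qed
  ultimately show ?thesis using \<open>open V\<close> \<open>homeomorphism T V f g\<close> by blast
qed

lemma lift_extends_past:
  fixes p :: "real \<Rightarrow> 'b::metric_space"
  assumes p: "path p" and sheet: "homeomorphism T V f g" "open V" "p \<tau> \<in> V" and \<tau>: "\<tau> \<in> {0..1}"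
    and approach: "\<And>\<delta>. \<delta> > 0 \<Longrightarrow> \<exists>s\<in>{0..\<tau>}. \<tau> - \<delta> < s \<and> (\<exists>q. is_lift f {0..s} p q \<and> q 0 = x \<and> q s \<in> T)"
  shows "\<exists>c\<in>{0..1}. (\<tau> < c \<or> c = 1) \<and> (\<exists>q. is_lift f {0..c} p q \<and> q 0 = x)"
proof -
  obtain e where "e > 0" "ball (p \<tau>) e \<subseteq> V" using sheet(2,3) open_contains_ball by blast
  moreover obtain \<delta> where "\<delta> > 0" and \<delta>: "\<forall>u\<in>{0..1}. dist u \<tau> < \<delta> \<longrightarrow> dist (p u) (p \<tau>) < e"
    using continuous_on_iff[THEN iffD1, rule_format, OF p[unfolded path_def] \<tau> \<open>e > 0\<close>] by auto
  ultimately have near: "p u \<in> V" if "u \<in> {0..1}" "\<bar>u - \<tau>\<bar> < \<delta>" for u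
  proof -
    have "dist (p u) (p \<tau>) < e" using \<delta> that by (simp add: dist_real_def)
    then show ?thesis using \<open>ball (p \<tau>) e \<subseteq> V\<close> by (auto simp: dist_commute)
  qed
  obtain s q where s: "s \<in> {0..\<tau>}" "\<tau> - \<delta> < s" and q: "is_lift f {0..s} p q" "q 0 = x" "q s \<in> T"
    using approach[OF \<open>\<delta> > 0\<close>] by blast
  define c where "c = min 1 (\<tau> + \<delta>/2)"
  have "s \<le> c" "c \<le> 1" "\<tau> < c \<or> c = 1" using s \<tau> \<open>\<delta> > 0\<close> unfolding c_def by auto
  have "p ` {s..c} \<subseteq> V" using near s \<open>\<delta> > 0\<close> unfolding c_def by (auto simp: abs_if)
  moreover have "continuous_on {s..c} p"
    using p unfolding path_def by (rule continuous_on_subset) (use s \<open>c \<le> 1\<close> in auto)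
  ultimately have "\<exists>q'. is_lift f {0..c} p q' \<and> q' 0 = q 0"
    using s \<open>s \<le> c\<close> by (intro lift_extend_through_sheet[OF sheet(1) q(1,3)]) auto
  then show ?thesis using q(2) s \<open>s \<le> c\<close> \<open>c \<le> 1\<close> \<open>\<tau> < c \<or> c = 1\<close> by auto
qed

lemma lift_extends_past_limit:
  fixes f :: "'a::metric_space \<Rightarrow> 'b::metric_space"
  assumes f: "local_homeomorphism f" "continuous_on UNIV f"
    and p: "path p" "continuation_property f p" and "f x = p 0" and "\<tau> \<in> {0..1}"
    and below: "\<And>c. c \<in> {0..<\<tau>} \<Longrightarrow> \<exists>q. is_lift f {0..c} p q \<and> q 0 = x"
  shows "\<exists>c\<in>{0..1}. (\<tau> < c \<or> c = 1) \<and> (\<exists>q. is_lift f {0..c} p q \<and> q 0 = x)"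
proof (cases "\<exists>q. is_lift f {0..\<tau>} p q \<and> q 0 = x")
  case True
  then obtain q where q: "is_lift f {0..\<tau>} p q" "q 0 = x" by blast
  obtain T V g where "q \<tau> \<in> T" "open V" "homeomorphism T V f g"
    using f(1) unfolding local_homeomorphism_def by blast
  moreover have "p \<tau> = f (q \<tau>)" using q(1) \<open>\<tau> \<in> {0..1}\<close> unfolding is_lift_def by auto
  ultimately have "p \<tau> \<in> V" using homeomorphism_image1 by blast
  show ?thesis
  proof (rule lift_extends_past[OF p(1) \<open>homeomorphism T V f g\<close> \<open>open V\<close> \<open>p \<tau> \<in> V\<close>
        \<open>\<tau> \<in> {0..1}\<close>])
    fix \<delta> :: real assume "\<delta> > 0"
    with q \<open>q \<tau> \<in> T\<close> \<open>\<tau> \<in> {0..1}\<close>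
    show "\<exists>s\<in>{0..\<tau>}. \<tau> - \<delta> < s \<and> (\<exists>q. is_lift f {0..s} p q \<and> q 0 = x \<and> q s \<in> T)"
      by (intro bexI[of _ \<tau>] conjI exI[of _ q]) auto
  qed
next
  case False
  have "\<tau> \<noteq> 0"
  proof
    assume "\<tau> = 0"
    then have "is_lift f {0..\<tau>} p (\<lambda>_. x)" using \<open>f x = p 0\<close> unfolding is_lift_def by auto
    with False show False by blast
  qed
  then have "\<tau> \<in> {0<..1}" using \<open>\<tau> \<in> {0..1}\<close> by auto
  then obtain Q where Q: "is_lift f {0..<\<tau>} p Q" "Q 0 = x"
    using lift_on_atLeastLessThan[OF f(1) _ below] by auto
  from lift_approaches_sheet[OF f p \<open>\<tau> \<in> {0<..1}\<close> Q(1)]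
  obtain T V g where sheet: "homeomorphism T V f g" "open V" "p \<tau> \<in> V"
    and approach: "\<forall>\<delta>>0. \<exists>s\<in>{0..<\<tau>}. \<tau> - \<delta> < s \<and> Q s \<in> T"
    by blast
  show ?thesis
  proof (rule lift_extends_past[OF p(1) sheet \<open>\<tau> \<in> {0..1}\<close>])
    fix \<delta> :: real assume "\<delta> > 0"
    then obtain s where s: "s \<in> {0..<\<tau>}" "\<tau> - \<delta> < s" "Q s \<in> T" using approach by blast
    then have "is_lift f {0..s} p Q" by (intro is_lift_subset[OF Q(1)]) auto
    with s Q(2) show "\<exists>s\<in>{0..\<tau>}. \<tau> - \<delta> < s \<and> (\<exists>q. is_lift f {0..s} p q \<and> q 0 = x \<and> q s \<in> T)"
      by (intro bexI[of _ s] conjI exI[of _ Q]) auto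
  qed
qed

lemma path_lift_exists:
  fixes f :: "'a::metric_space \<Rightarrow> 'b::metric_space"
  assumes f: "local_homeomorphism f" "continuous_on UNIV f"
    and p: "path p" "continuation_property f p" and "f x = p 0"
  shows "\<exists>q. is_lift f {0..1} p q \<and> q 0 = x"
proof -
  define B where "B = {c \<in> {0..1}. \<exists>q. is_lift f {0..c} p q \<and> q 0 = x}"
  have "0 \<in> B" unfolding B_def is_lift_def using \<open>f x = p 0\<close> by (auto intro!: exI[of _ "\<lambda>_. x"])
  have "B \<subseteq> {0..1}" unfolding B_def by auto
  then have bdd: "bdd_above B" by (meson bdd_above_Icc bdd_above_mono)
  define \<tau> where "\<tau> = Sup B"
  have "0 \<le> \<tau>" unfolding \<tau>_def by (rule cSup_upper[OF \<open>0 \<in> B\<close> bdd])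
  have "\<tau> \<le> 1" unfolding \<tau>_def using \<open>0 \<in> B\<close> \<open>B \<subseteq> {0..1}\<close> by (intro cSup_least) auto
  have below: "\<exists>q. is_lift f {0..c} p q \<and> q 0 = x" if c: "c \<in> {0..<\<tau>}" for c
  proof -
    obtain c' where "c' \<in> B" "c < c'"
      using less_cSup_iff[OF _ bdd, of c] \<open>0 \<in> B\<close> c unfolding \<tau>_def by auto
    then show ?thesis using c is_lift_subset[of f "{0..c'}" p _ "{0..c}"] unfolding B_def by auto
  qed
  have "\<tau> \<in> {0..1}" using \<open>0 \<le> \<tau>\<close> \<open>\<tau> \<le> 1\<close> by simp
  from lift_extends_past_limit[OF f p \<open>f x = p 0\<close> this below]
  obtain c where "c \<in> B" "\<tau> < c \<or> c = 1" unfolding B_def by blast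
  moreover have "c \<le> \<tau>" unfolding \<tau>_def using \<open>c \<in> B\<close> bdd by (rule cSup_upper)
  ultimately have "1 \<in> B" by auto
  then show ?thesis unfolding B_def by blast
qed

lemma rectifiable_reversepath:
  assumes "rectifiable_path p"
  shows "rectifiable_path (reversepath p)"
proof -
  have "partition_sums (reversepath p) 0 1 \<subseteq> partition_sums p 0 1"
  proof
    fix s assume "s \<in> partition_sums (reversepath p) 0 1"
    then obtain t n where s: "s = (\<Sum>i<n. dist (reversepath p (t i)) (reversepath p (t (Suc i))))"
      and t: "t 0 = 0" "t n = 1" "\<forall>i<n. t i \<le> t (Suc i)"
      unfolding partition_sums_def by blast
    define u where "u i = 1 - t (n - i)" for i
    have "u 0 = 0" "u n = 1" using t unfolding u_def by auto
    moreover have "\<forall>i<n. u i \<le> u (Suc i)"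
    proof (intro allI impI)
      fix i assume "i < n"
      then have "n - i = Suc (n - Suc i)" "n - Suc i < n" by auto
      then show "u i \<le> u (Suc i)" using t(3) unfolding u_def by simp
    qed
    moreover have "(\<Sum>i<n. dist (p (u i)) (p (u (Suc i)))) = s"
    proof -
      define g where "g j = dist (p (1 - t j)) (p (1 - t (Suc j)))" for j
      have "(\<Sum>i<n. dist (p (u i)) (p (u (Suc i)))) = (\<Sum>i<n. g (n - Suc i))"
      proof (rule sum.cong[OF refl])
        fix i assume "i \<in> {..<n}"
        then have "n - i = Suc (n - Suc i)" by simp
        then show "dist (p (u i)) (p (u (Suc i))) = g (n - Suc i)"
          unfolding u_def g_def by (simp add: dist_commute)
      qed
      also have "\<dots> = (\<Sum>i<n. g i)" by (rule sum.nat_diff_reindex)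
      finally show ?thesis unfolding s g_def reversepath_def .
    qed
    ultimately show "s \<in> partition_sums p 0 1"
      unfolding partition_sums_def by blast
  qed
  then have "path_length (reversepath p) 0 1 \<le> path_length p 0 1"
    unfolding path_length_def by (rule SUP_subset_mono[OF _ order_refl])
  then show ?thesis using assms unfolding rectifiable_path_def by (auto simp: path_reversepath)
qed

definition has_rectifiable_path_lifting :: "('a::topological_space \<Rightarrow> 'b::metric_space) \<Rightarrow> bool" where
  "has_rectifiable_path_lifting f \<longleftrightarrow>
     (\<forall>p x. rectifiable_path p \<longrightarrow> f x = p 0 \<longrightarrow> (\<exists>q. is_lift f {0..1} p q \<and> q 0 = x))"

lemma has_rectifiable_path_liftingD:
  "has_rectifiable_path_lifting f \<Longrightarrow> rectifiable_path p \<Longrightarrow> f x = p 0 \<Longrightarrow>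
    \<exists>q. is_lift f {0..1} p q \<and> q 0 = x"
  unfolding has_rectifiable_path_lifting_def by blast

lemma lift_ending_at:
  assumes lifting: "has_rectifiable_path_lifting f"
    and "rectifiable_path p" "f z = p 1"
  shows "\<exists>q. is_lift f {0..1} p q \<and> q 1 = z"
proof -
  obtain q where q: "is_lift f {0..1} (reversepath p) q" "q 0 = z"
    using has_rectifiable_path_liftingD[OF lifting rectifiable_reversepath[OF assms(2)]] assms(3)
    by (auto simp: reversepath_def)
  have "continuous_on {0..1} (reversepath q)"
    using q(1) path_reversepath[of q] unfolding is_lift_def path_def by blast
  moreover have "f (reversepath q t) = p t" if "t \<in> {0..1}" for t
    using q(1) that unfolding is_lift_def reversepath_def by auto
  ultimately show ?thesis using q(2) unfolding is_lift_def reversepath_def by auto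
qed

lemma tube_in_preimage:
  fixes H :: "'c::topological_space \<times> 'd::topological_space \<Rightarrow> 'b::topological_space"
  assumes "continuous_on (U \<times> S) H" "open V" "compact K" "K \<subseteq> S" "y \<in> U" "H ` ({y} \<times> K) \<subseteq> V"
  shows "\<exists>X. open X \<and> y \<in> X \<and> (\<forall>z\<in>U \<inter> X. \<forall>t\<in>K. H (z, t) \<in> V)"
proof -
  obtain W where W: "open W" "W \<inter> (U \<times> S) = H -` V \<inter> (U \<times> S)"
    using assms(1,2) unfolding continuous_on_open_invariant by blast
  have "{y} \<times> K \<subseteq> W" using W(2) assms(4-6) by blast
  then obtain X where "y \<in> X" "open X" "X \<times> K \<subseteq> W"
    using Elementary_Topology.tube_lemma[OF assms(3) W(1)] by blast
  then show ?thesis using W(2) assms(4) by blast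
qed

lemma lifted_homotopy_on_sheet:
  fixes f :: "'a::metric_space \<Rightarrow> 'b::metric_space" and H :: "'c::metric_space \<times> real \<Rightarrow> 'b"
  assumes f: "local_homeomorphism f" and H: "continuous_on (U \<times> {0..1}) H"
    and G: "\<forall>y\<in>U. is_lift f {0..1} (\<lambda>t. H (y, t)) (G y)"
    and "y1 \<in> U" "\<tau> \<in> {0..1}"
  shows "\<exists>N X T g. openin (top_of_set {0..1}) N \<and> \<tau> \<in> N \<and> open X \<and> y1 \<in> X \<and> open T \<and>
           (\<forall>t\<in>N. G y1 t \<in> T \<and> isCont g (H (y1, t))) \<and>
           (\<forall>y\<in>U \<inter> X. \<forall>s\<in>N. \<forall>t\<in>N. G y s \<in> T \<longrightarrow> G y t = g (H (y, t)))"
proof -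
  \<comment> \<open>Near \<tau> the lift G y1 stays in one sheet T; by the tube lemma the paths H(y, -) for y near
    y1 stay in f ` T near \<tau>, so any lift meeting T there is the inverse branch applied to H(y, -).\<close>
  obtain T V g where "G y1 \<tau> \<in> T" "open T" "open V" and sheet: "homeomorphism T V f g"
    using f unfolding local_homeomorphism_def by blast
  obtain e where "e > 0" "ball (G y1 \<tau>) e \<subseteq> T" using \<open>G y1 \<tau> \<in> T\<close> \<open>open T\<close> open_contains_ball by blast
  have "continuous_on {0..1} (G y1)" using G[rule_format, OF \<open>y1 \<in> U\<close>] unfolding is_lift_def by blast
  then obtain \<delta> where "\<delta> > 0" and \<delta>: "\<forall>t\<in>{0..1}. dist t \<tau> < \<delta> \<longrightarrow> dist (G y1 t) (G y1 \<tau>) < e"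
    using continuous_on_iff[THEN iffD1, rule_format, OF _ \<open>\<tau> \<in> {0..1}\<close> \<open>e > 0\<close>] by blast
  define I where "I = {max 0 (\<tau> - \<delta>/2) .. min 1 (\<tau> + \<delta>/2)}"
  define N where "N = {0..1} \<inter> {\<tau> - \<delta>/2 <..< \<tau> + \<delta>/2}"
  have "I \<subseteq> {0..1}" "compact I" "connected I" unfolding I_def by auto
  have "N \<subseteq> I" unfolding N_def I_def by auto
  have GT: "G y1 t \<in> T" if "t \<in> I" for t
  proof -
    have "dist (G y1 t) (G y1 \<tau>) < e"
      using \<delta> that \<open>\<delta> > 0\<close> \<open>I \<subseteq> {0..1}\<close> unfolding I_def by (auto simp: dist_real_def)
    then show ?thesis using \<open>ball (G y1 \<tau>) e \<subseteq> T\<close> by (auto simp: dist_commute)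
  qed
  have HV: "H (y1, t) \<in> V" if "t \<in> I" for t
  proof -
    have "H (y1, t) = f (G y1 t)"
      using G[rule_format, OF \<open>y1 \<in> U\<close>] that \<open>I \<subseteq> {0..1}\<close> unfolding is_lift_def by auto
    then show ?thesis using GT[OF that] homeomorphism_image1[OF sheet] by (metis imageI)
  qed
  then have "H ` ({y1} \<times> I) \<subseteq> V" by auto
  from tube_in_preimage[OF H \<open>open V\<close> \<open>compact I\<close> \<open>I \<subseteq> {0..1}\<close> \<open>y1 \<in> U\<close> this]
  obtain X where "open X" "y1 \<in> X" and X: "\<forall>y\<in>U \<inter> X. \<forall>t\<in>I. H (y, t) \<in> V"
    by blast
  have Hy: "continuous_on {0..1} (\<lambda>t. H (y, t))" if "y \<in> U" for y
    by (rule continuous_on_compose2[OF H continuous_on_Pair[OF continuous_on_const continuous_on_id]])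
      (use that in auto)
  have formula: "G y t = g (H (y, t))" if "y \<in> U \<inter> X" "s \<in> I" "G y s \<in> T" "t \<in> I" for y s t
    using that X \<open>I \<subseteq> {0..1}\<close> continuous_on_subset[OF Hy]
    by (intro lift_eq_on_sheet[OF f sheet \<open>connected I\<close> is_lift_subset[OF G[rule_format]]]) auto
  have "isCont g (H (y1, t))" if "t \<in> I" for t
    using homeomorphism_cont2[OF sheet] \<open>open V\<close> HV[OF that] by (simp add: continuous_on_eq_continuous_at)
  then have "\<forall>t\<in>N. G y1 t \<in> T \<and> isCont g (H (y1, t))" using GT \<open>N \<subseteq> I\<close> by blast
  moreover have "\<forall>y\<in>U \<inter> X. \<forall>s\<in>N. \<forall>t\<in>N. G y s \<in> T \<longrightarrow> G y t = g (H (y, t))"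
    using formula \<open>N \<subseteq> I\<close> by blast
  moreover have "openin (top_of_set {0..1}) N" unfolding N_def by (rule openin_open_Int) simp
  moreover have "\<tau> \<in> N" using \<open>\<tau> \<in> {0..1}\<close> \<open>\<delta> > 0\<close> unfolding N_def by simp
  ultimately show ?thesis
    using \<open>open X\<close> \<open>y1 \<in> X\<close> \<open>open T\<close> by (intro exI[of _ N] exI[of _ X] exI[of _ T] exI[of _ g]) simp
qed

lemma lifted_homotopy_continuity_propagates:
  fixes f :: "'a::metric_space \<Rightarrow> 'b::metric_space" and H :: "'c::metric_space \<times> real \<Rightarrow> 'b"
  assumes f: "local_homeomorphism f" and H: "continuous_on (U \<times> {0..1}) H"
    and G: "\<forall>y\<in>U. is_lift f {0..1} (\<lambda>t. H (y, t)) (G y)"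
    and "y1 \<in> U" "\<tau> \<in> {0..1}"
  shows "\<exists>N. openin (top_of_set {0..1}) N \<and> \<tau> \<in> N \<and>
           (\<forall>s\<in>N. \<forall>t\<in>N. continuous (at y1 within U) (\<lambda>y. G y s) \<longrightarrow>
              continuous (at y1 within U) (\<lambda>y. G y t))"
proof -
  obtain N X T g where N: "openin (top_of_set {0..1}) N" "\<tau> \<in> N" and "open X" "y1 \<in> X" "open T"
    and at_y1: "\<forall>t\<in>N. G y1 t \<in> T \<and> isCont g (H (y1, t))"
    and formula: "\<forall>y\<in>U \<inter> X. \<forall>s\<in>N. \<forall>t\<in>N. G y s \<in> T \<longrightarrow> G y t = g (H (y, t))"
    using lifted_homotopy_on_sheet[OF f H G \<open>y1 \<in> U\<close> \<open>\<tau> \<in> {0..1}\<close>] by (elim exE conjE)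
  have "continuous (at y1 within U) (\<lambda>y. G y t)"
    if "s \<in> N" "t \<in> N" and cont_s: "continuous (at y1 within U) (\<lambda>y. G y s)" for s t
  proof -
    have "G y1 s \<in> T" using at_y1 that(1) by blast
    with cont_s[unfolded continuous_within] \<open>open T\<close>
    have "eventually (\<lambda>y. G y s \<in> T) (at y1 within U)" by (rule topological_tendstoD)
    moreover have "eventually (\<lambda>y. y \<in> U \<inter> X) (at y1 within U)"
      unfolding eventually_at_topological using \<open>open X\<close> \<open>y1 \<in> X\<close> by blast
    ultimately have "eventually (\<lambda>y. g (H (y, t)) = G y t) (at y1 within U)"
    proof eventually_elim
      case (elim y)
      then show ?case using formula that(1,2) by (metis IntI)
    qed
    moreover have "continuous (at y1 within U) (\<lambda>y. g (H (y, t)))"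
    proof (rule continuous_within_compose3[where f="\<lambda>y. H (y, t)"])
      show "isCont g (H (y1, t))" using at_y1 that(2) by blast
      have "t \<in> {0..1}" using openin_imp_subset[OF N(1)] that(2) by auto
      then have "continuous_on U (\<lambda>y. H (y, t))"
        by (intro continuous_on_compose2[OF H continuous_on_Pair[OF continuous_on_id continuous_on_const]])
          auto
      then show "continuous (at y1 within U) (\<lambda>y. H (y, t))"
        using \<open>y1 \<in> U\<close> by (simp add: continuous_on_eq_continuous_within)
    qed
    moreover have "g (H (y1, t)) = G y1 t"
      using formula at_y1 \<open>y1 \<in> U\<close> \<open>y1 \<in> X\<close> that(2) by (metis IntI)
    ultimately show ?thesis unfolding continuous_within by (auto intro: Lim_transform_eventually)
  qed
  with N show ?thesis by blast
qed

lemma lifted_homotopy_continuous: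
  fixes f :: "'a::metric_space \<Rightarrow> 'b::metric_space" and H :: "'c::metric_space \<times> real \<Rightarrow> 'b"
  assumes f: "local_homeomorphism f" and H: "continuous_on (U \<times> {0..1}) H"
    and G: "\<And>y. y \<in> U \<Longrightarrow> is_lift f {0..1} (\<lambda>t. H (y, t)) (G y) \<and> G y 0 = x"
    and "y1 \<in> U" "s \<in> {0..1}"
  shows "continuous (at y1 within U) (\<lambda>y. G y s)"
proof (rule connected_induction_simple[OF connected_Icc, where a=0, OF _ \<open>s \<in> {0..1}\<close>])
  show "continuous (at y1 within U) (\<lambda>y. G y 0)"
    by (rule continuous_transform_within[where \<delta>=1 and f="\<lambda>_. x"]) (use G \<open>y1 \<in> U\<close> in auto)
qed (use lifted_homotopy_continuity_propagates[OF f H] G \<open>y1 \<in> U\<close> in auto)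

lemma homeomorphism_continuous_section:
  fixes f :: "'a::metric_space \<Rightarrow> 'b::metric_space"
  assumes f: "local_homeomorphism f" "continuous_on UNIV f"
    and "open U" "continuous_on U \<sigma>" and right_inv: "\<And>y. y \<in> U \<Longrightarrow> f (\<sigma> y) = y"
  shows "open (\<sigma> ` U) \<and> homeomorphism (\<sigma> ` U) U f \<sigma>"
proof
  show "open (\<sigma> ` U)"
  proof (subst open_subopen, intro ballI)
    fix z assume "z \<in> \<sigma> ` U"
    then obtain y where "y \<in> U" "z = \<sigma> y" by blast
    obtain T V g where "z \<in> T" "open T" and sheet: "homeomorphism T V f g"
      using f(1) unfolding local_homeomorphism_def by blast
    define N where "N = T \<inter> f -` (U \<inter> \<sigma> -` T)"
    have "open (U \<inter> \<sigma> -` T)" using continuous_open_preimage[OF assms(4,3) \<open>open T\<close>] .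
    then have "open (f -` (U \<inter> \<sigma> -` T))"
      using continuous_open_preimage[OF f(2) open_UNIV] by (simp only: Int_UNIV_left)
    then have "open N" using \<open>open T\<close> unfolding N_def by (rule open_Int[rotated])
    moreover have "z \<in> N" using \<open>z \<in> T\<close> \<open>y \<in> U\<close> \<open>z = \<sigma> y\<close> right_inv unfolding N_def by auto
    moreover have "N \<subseteq> \<sigma> ` U"
    proof
      fix w assume "w \<in> N"
      then have "f w \<in> U" "\<sigma> (f w) \<in> T" "w \<in> T" unfolding N_def by auto
      then have "\<sigma> (f w) = w" using right_inv homeomorphism_apply1[OF sheet] by metis
      then show "w \<in> \<sigma> ` U" using \<open>f w \<in> U\<close> by (metis imageI)
    qed
    ultimately show "\<exists>N. open N \<and> z \<in> N \<and> N \<subseteq> \<sigma> ` U" by blast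
  qed
  show "homeomorphism (\<sigma> ` U) U f \<sigma>"
    unfolding homeomorphism_def
    using right_inv assms(4) continuous_on_subset[OF f(2)] by (auto simp: image_iff)
qed

lemma lifted_contraction_endpoints:
  fixes f :: "'a::metric_space \<Rightarrow> 'b::metric_space" and H :: "'b \<times> real \<Rightarrow> 'b"
  assumes f: "local_homeomorphism f"
    and lifting: "has_rectifiable_path_lifting f"
    and H: "continuous_on (U \<times> {0..1}) H"
    and contraction: "\<forall>y\<in>U. H (y, 0) = y0 \<and> H (y, 1) = y \<and> rectifiable_path (\<lambda>t. H (y, t))"
  shows "\<exists>\<sigma>. (\<forall>x y. f x = y0 \<longrightarrow> y \<in> U \<longrightarrow> f (\<sigma> x y) = y) \<and>
           (\<forall>x. f x = y0 \<longrightarrow> continuous_on U (\<sigma> x)) \<and>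
           (\<forall>x1 x2 y. f x1 = y0 \<longrightarrow> f x2 = y0 \<longrightarrow> y \<in> U \<longrightarrow> \<sigma> x1 y = \<sigma> x2 y \<longrightarrow> x1 = x2) \<and>
           (\<forall>z. f z \<in> U \<longrightarrow> (\<exists>x. f x = y0 \<and> \<sigma> x (f z) = z))"
proof -
  \<comment> \<open>\<sigma> x y is the end point of the lift starting at x of the contraction path from y0 to y.\<close>
  define G where "G x y = (SOME q. is_lift f {0..1} (\<lambda>t. H (y, t)) q \<and> q 0 = x)" for x y
  have G: "is_lift f {0..1} (\<lambda>t. H (y, t)) (G x y) \<and> G x y 0 = x" if "f x = y0" "y \<in> U" for x y
  proof -
    have "rectifiable_path (\<lambda>t. H (y, t))" "f x = H (y, 0)"
      using contraction[rule_format, OF that(2)] that(1) by auto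
    then have "\<exists>q. is_lift f {0..1} (\<lambda>t. H (y, t)) q \<and> q 0 = x"
      by (rule has_rectifiable_path_liftingD[OF lifting])
    then show ?thesis unfolding G_def by (rule someI_ex)
  qed
  define \<sigma> where "\<sigma> x y = G x y 1" for x y
  have right_inv: "f (\<sigma> x y) = y" if "f x = y0" "y \<in> U" for x y
    using G[OF that] contraction[rule_format, OF that(2)] unfolding \<sigma>_def is_lift_def by auto
  have \<sigma>_cont: "continuous_on U (\<sigma> x)" if x: "f x = y0" for x
    unfolding continuous_on_eq_continuous_within \<sigma>_def
  proof
    fix y assume "y \<in> U"
    show "continuous (at y within U) (\<lambda>y. G x y 1)"
      using G[OF x] \<open>y \<in> U\<close> by (intro lifted_homotopy_continuous[OF f H]) auto
  qed
  have injective: "x1 = x2" if "f x1 = y0" "f x2 = y0" "y \<in> U" "\<sigma> x1 y = \<sigma> x2 y" for x1 x2 y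
    using lift_unique[OF f connected_Icc[of 0 1], where p="\<lambda>t. H (y, t)" and q="G x1 y" and r="G x2 y"
        and a=1 and t=0]
      G[OF that(1,3)] G[OF that(2,3)] that(4)
    unfolding \<sigma>_def by simp
  have onto: "\<exists>x. f x = y0 \<and> \<sigma> x (f z) = z" if z: "f z \<in> U" for z
  proof -
    have "rectifiable_path (\<lambda>t. H (f z, t))" "f z = H (f z, 1)" using contraction[rule_format, OF z] by auto
    then obtain q where q: "is_lift f {0..1} (\<lambda>t. H (f z, t)) q" "q 1 = z"
      using lift_ending_at[OF lifting] by blast
    then have "f (q 0) = y0" using contraction[rule_format, OF z] unfolding is_lift_def by auto
    then have "G (q 0) (f z) 1 = q 1"
      using lift_unique[OF f connected_Icc[of 0 1], where p="\<lambda>t. H (f z, t)" and q="G (q 0) (f z)"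
          and r=q and a=0 and t=1]
        G[OF _ z] q(1)
      by auto
    then show ?thesis using \<open>f (q 0) = y0\<close> q(2) unfolding \<sigma>_def by blast
  qed
  show ?thesis using right_inv \<sigma>_cont injective onto by (intro exI[of _ \<sigma>]) blast
qed

lemma evenly_covered_if_contractible:
  fixes f :: "'a::metric_space \<Rightarrow> 'b::metric_space" and H :: "'b \<times> real \<Rightarrow> 'b"
  assumes f: "local_homeomorphism f" "continuous_on UNIV f"
    and lifting: "has_rectifiable_path_lifting f"
    and "open U" and H: "continuous_on (U \<times> {0..1}) H"
    and contraction: "\<forall>y\<in>U. H (y, 0) = y0 \<and> H (y, 1) = y \<and> rectifiable_path (\<lambda>t. H (y, t))"
  shows "\<exists>\<V>. \<Union>\<V> = f -` U \<and> (\<forall>W\<in>\<V>. open W) \<and> pairwise disjnt \<V> \<and>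
           (\<forall>W\<in>\<V>. \<exists>g. homeomorphism W U f g)"
proof -
  obtain \<sigma> where right_inv: "\<forall>x y. f x = y0 \<longrightarrow> y \<in> U \<longrightarrow> f (\<sigma> x y) = y"
    and \<sigma>_cont: "\<forall>x. f x = y0 \<longrightarrow> continuous_on U (\<sigma> x)"
    and injective: "\<forall>x1 x2 y. f x1 = y0 \<longrightarrow> f x2 = y0 \<longrightarrow> y \<in> U \<longrightarrow> \<sigma> x1 y = \<sigma> x2 y \<longrightarrow> x1 = x2"
    and onto: "\<forall>z. f z \<in> U \<longrightarrow> (\<exists>x. f x = y0 \<and> \<sigma> x (f z) = z)"
    using lifted_contraction_endpoints[OF f(1) lifting H contraction] by (elim exE conjE)
  note right_inv = right_inv[rule_format] and \<sigma>_cont = \<sigma>_cont[rule_format]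
    and injective = injective[rule_format] and onto = onto[rule_format]
  have sheets: "open (\<sigma> x ` U) \<and> homeomorphism (\<sigma> x ` U) U f (\<sigma> x)" if "f x = y0" for x
    using homeomorphism_continuous_section[OF f \<open>open U\<close> \<sigma>_cont[OF that] right_inv[OF that]] .
  define \<V> where "\<V> = (\<lambda>x. \<sigma> x ` U) ` (f -` {y0})"
  have "\<Union>\<V> = f -` U"
  proof
    show "\<Union>\<V> \<subseteq> f -` U" using right_inv unfolding \<V>_def by auto
    show "f -` U \<subseteq> \<Union>\<V>"
    proof
      fix z assume "z \<in> f -` U"
      then obtain x where "f x = y0" "\<sigma> x (f z) = z" using onto by blast
      with \<open>z \<in> f -` U\<close> show "z \<in> \<Union>\<V>"
        unfolding \<V>_def by (intro UN_I[of x] rev_image_eqI[of "f z"]) auto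
    qed
  qed
  moreover have "pairwise disjnt \<V>"
    unfolding \<V>_def
  proof (rule pairwise_imageI)
    fix x1 x2 assume "x1 \<in> f -` {y0}" "x2 \<in> f -` {y0}" "x1 \<noteq> x2"
    have False if "y1 \<in> U" "y2 \<in> U" "\<sigma> x1 y1 = \<sigma> x2 y2" for y1 y2
    proof -
      have "y1 = y2" using right_inv[of x1 y1] right_inv[of x2 y2] that \<open>x1 \<in> f -` {y0}\<close> \<open>x2 \<in> f -` {y0}\<close>
        by auto
      then show False
        using injective[of x1 x2 y1] that \<open>x1 \<in> f -` {y0}\<close> \<open>x2 \<in> f -` {y0}\<close> \<open>x1 \<noteq> x2\<close> by auto
    qed
    then show "disjnt (\<sigma> x1 ` U) (\<sigma> x2 ` U)" unfolding disjnt_def by blast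
  qed
  moreover have "\<forall>W\<in>\<V>. open W \<and> (\<exists>g. homeomorphism W U f g)"
    using sheets unfolding \<V>_def by blast
  ultimately show ?thesis by (intro exI[of _ \<V>]) blast
qed

lemma open_range_local_homeomorphism:
  assumes "local_homeomorphism f"
  shows "open (range f)"
proof (subst open_subopen, intro ballI)
  fix y assume "y \<in> range f"
  then obtain x where "y = f x" by blast
  obtain T V g where "x \<in> T" "open V" "homeomorphism T V f g"
    using assms unfolding local_homeomorphism_def by blast
  then have "y \<in> V" "V \<subseteq> range f" using homeomorphism_image1 \<open>y = f x\<close> by blast+
  then show "\<exists>V. open V \<and> y \<in> V \<and> V \<subseteq> range f" using \<open>open V\<close> by blast
qed

lemma locally_R_contractible_imp_contraction:
  fixes y0 :: "'b::metric_space"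
  assumes "locally_R_contractible (UNIV :: 'b set)"
  shows "\<exists>U H. open U \<and> y0 \<in> U \<and> continuous_on (U \<times> {0..1}) H \<and>
           (\<forall>y\<in>U. H (y, 0) = y0 \<and> H (y, 1) = y \<and> rectifiable_path (\<lambda>t. H (y, t)))"
proof -
  obtain U H where "open U" "y0 \<in> U" "continuous_on (U \<times> {0..1}) H"
    "\<forall>y\<in>U. H (y, 0) = y0 \<and> H (y, 1) = y" "\<forall>y\<in>U. rectifiable_path (\<lambda>t. H (y, t))"
    using assms[unfolded locally_R_contractible_def, rule_format, OF UNIV_I[of y0]]
    by (elim exE conjE)
  then show ?thesis by blast
qed

lemma surj_if_rectifiable_path_lifting:
  fixes f :: "'a::metric_space \<Rightarrow> 'b::metric_space"
  assumes "local_homeomorphism f" "connected (UNIV :: 'b set)" "locally_R_contractible (UNIV :: 'b set)"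
    and lifting: "has_rectifiable_path_lifting f"
  shows "surj f"
proof -
  have "open (- range f)"
  proof (subst open_subopen, intro ballI)
    fix y0 assume "y0 \<in> - range f"
    obtain U H where "open U" "y0 \<in> U"
      and H: "\<forall>y\<in>U. H (y, 0) = y0 \<and> H (y, 1) = y \<and> rectifiable_path (\<lambda>t. H (y, t))"
      using locally_R_contractible_imp_contraction[OF assms(3)] by blast
    have "y \<notin> range f" if "y \<in> U" for y
    proof
      assume "y \<in> range f"
      then obtain z where "f z = H (y, 1)" using H \<open>y \<in> U\<close> by auto
      then obtain q where "is_lift f {0..1} (\<lambda>t. H (y, t)) q"
        using lift_ending_at[OF lifting] H \<open>y \<in> U\<close> by blast
      then have "f (q 0) = y0" using H \<open>y \<in> U\<close> unfolding is_lift_def by auto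
      then show False using \<open>y0 \<in> - range f\<close> by blast
    qed
    then show "\<exists>T. open T \<and> y0 \<in> T \<and> T \<subseteq> - range f" using \<open>open U\<close> \<open>y0 \<in> U\<close> by blast
  qed
  then have "range f \<inter> UNIV = {} \<or> - range f \<inter> UNIV = {}"
    using connectedD[OF assms(2) open_range_local_homeomorphism[OF assms(1)]] by blast
  then show ?thesis by auto
qed

lemma covering_space_if_rectifiable_path_lifting:
  fixes f :: "'a::metric_space \<Rightarrow> 'b::metric_space"
  assumes f: "local_homeomorphism f" "continuous_on UNIV f"
    and "connected (UNIV :: 'b set)" and "locally_R_contractible (UNIV :: 'b set)"
    and lifting: "has_rectifiable_path_lifting f"
  shows "covering_space UNIV f UNIV"
proof (rule covering_spaceI)
  fix y0 :: 'b
  obtain U H where "open U" "y0 \<in> U" and H: "continuous_on (U \<times> {0..1}) H"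
    and contracts: "\<forall>y\<in>U. H (y, 0) = y0 \<and> H (y, 1) = y \<and> rectifiable_path (\<lambda>t. H (y, t))"
    using locally_R_contractible_imp_contraction[OF assms(4)] by blast
  have "\<exists>\<V>. \<Union>\<V> = f -` U \<and> (\<forall>W\<in>\<V>. open W) \<and> pairwise disjnt \<V> \<and>
      (\<forall>W\<in>\<V>. \<exists>g. homeomorphism W U f g)"
    by (rule evenly_covered_if_contractible[OF f lifting \<open>open U\<close> H contracts])
  then obtain \<V> where \<V>: "\<Union>\<V> = f -` U" "\<forall>W\<in>\<V>. open W" "pairwise disjnt \<V>"
      "\<forall>W\<in>\<V>. \<exists>g. homeomorphism W U f g"
    by (elim exE conjE)
  show "\<exists>T. y0 \<in> T \<and> openin (top_of_set UNIV) T \<and>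
      (\<exists>\<V>. \<Union>\<V> = UNIV \<inter> f -` T \<and> (\<forall>W\<in>\<V>. openin (top_of_set UNIV) W) \<and>
           pairwise disjnt \<V> \<and> (\<forall>W\<in>\<V>. \<exists>g. homeomorphism W T f g))"
  proof (intro exI[of _ U] conjI exI[of _ \<V>])
    show "\<Union>\<V> = UNIV \<inter> f -` U" using \<V>(1) by simp
    show "\<forall>W\<in>\<V>. openin (top_of_set UNIV) W" using \<V>(2) by simp
  qed (use \<V>(3,4) \<open>y0 \<in> U\<close> \<open>open U\<close> in auto)
qed (use f(2) surj_if_rectifiable_path_lifting[OF f(1) assms(3,4) lifting] in auto)

theorem theorem4:
  fixes f :: "'a::metric_space \<Rightarrow> 'b::metric_space"
  assumes "continuous_on UNIV f"
    and "complete (UNIV :: 'a set)"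
    and "\<And>x::'a. x islimpt UNIV"
    and "\<And>p. rectifiable_path p \<Longrightarrow> bounded_path_lifting f p"
  shows "(\<forall>p. rectifiable_path p \<longrightarrow> continuation_property f p) \<and>
         (path_connected (UNIV :: 'b set) \<and> locally_R_contractible (UNIV :: 'b set) \<and>
          local_homeomorphism f \<longrightarrow> covering_space UNIV f UNIV)"
proof -
  have continuation: "continuation_property f p" if "rectifiable_path p" for p
    using continuation_property_if_bounded_path_lifting[OF that assms(4)[OF that] assms(2)] .
  have "covering_space UNIV f UNIV"
    if "path_connected (UNIV :: 'b set)" "locally_R_contractible (UNIV :: 'b set)" "local_homeomorphism f"
  proof (rule covering_space_if_rectifiable_path_lifting[OF that(3) assms(1)
        path_connected_imp_connected[OF that(1)] that(2)])
    show "has_rectifiable_path_lifting f"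
      unfolding has_rectifiable_path_lifting_def
      using path_lift_exists[OF that(3) assms(1)] continuation unfolding rectifiable_path_def by blast
  qed
  with continuation show ?thesis by blast
qed

end
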